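(* Let $t$ be a closed $\Sigma'$-term, $\phi$ a dAEL sentence over $\Sigma$, $\mathcal B$ a universally consistent (consistent) distributed belief pair, and $J$ a $\Sigma'$-structure. Then $\tau_{\mathit{formula}}(t,\phi)^{\tau_{\mathit{beliefpair}}(\mathcal B),J}=\phi^{\mathcal B,J_t}$.
   Context: Standing setup (dAEL). $\Sigma=\Sigma_o\uplus\Sigma_s$ is a first-order vocabulary (objective and subjective symbols). A nonempty domain $D$ and a $\Sigma_o$-structure $I_o$ with domain $D$ are fixed, as is a set of agents $\mathcal{A}\subseteq D$. For each $A\in\mathcal{A}$ there is a constant $A\in\Sigma_o$ with $A^{I_o}=A$, and $\Sigma_o$ contains a unary predicate $\mathrm{Apred}$ with $\mathrm{Apred}^{I_o}=\mathcal{A}$. "Structure" means a $\Sigma$-structure with domain $D$ that agrees with $I_o$ on $\Sigma_o$. Formulas of dAEL are built from atoms $P(\bar t)$ ($P\in\Sigma$ or equality) using $\wedge,\neg,\forall x$, and the modal rule: if $\varphi$ is a formula and $t$ a term then $K_t\varphi$ is a formula. Truth values are $\mathbf t,\mathbf f,\mathbf u$ with truth order $\mathbf f<_t\mathbf u<_t\mathbf t$; $\mathbf t^{-1}=\mathbf f$, $\mathbf f^{-1}=\mathbf t$, $\mathbf u^{-1}=\mathbf u$. A possible world structure (PWS) is a set of structures. A distributed possible world structure (DPWS) is a family $\mathcal Q=(\mathcal Q_A)_{A\in\mathcal A}$ of PWSs. A distributed belief pair (DBP) is a pair $\mathcal B=(\mathcal B^c,\mathcal B^l)$ of DPWSs,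 consistent if $\mathcal B^l_A\subseteq\mathcal B^c_A$ for all $A$. A DPWS $\mathcal Q$ is universally consistent if $\mathcal Q_A\ne\emptyset$ for all $A$; a DBP $\mathcal B$ is universally consistent if $\mathcal B^l$ is. Three-valued value $\varphi^{\mathcal B,I,a}$: atoms get their two-valued value in $I$; $\neg$ by ${}^{-1}$, $\wedge$ and $\forall$ by $\le_t$-glb (Kleene); $(K_t\varphi)^{\mathcal B,I,a}$ is $\mathbf t$ if $t^{I,a}\in\mathcal A$ and $\varphi^{\mathcal B,J,a}=\mathbf t$ for all $J\in\mathcal B^c_{t^{I,a}}$; $\mathbf f$ if $t^{I,a}\notin\mathcal A$ or $\varphi^{\mathcal B,J,a}=\mathbf f$ for some $J\in\mathcal B^l_{t^{I,a}}$; $\mathbf u$ otherwise; for sentences the assignment is omitted. Translation to AEL. $\Sigma'$ consists of all symbols of $\Sigma_o$ and all symbols of $\Sigma_s$ with arity increased by one. A fixed element $\delta\in D$ is chosen. A $\Sigma'$-structure always has domain $D$, agrees with $I_o$ on $\Sigma_o$, and is normal: for every $f\in\Sigma_s$, $f^J(\bar d,d)=\delta$ whenever $d\notin\mathcal A$, and for every relation $R\in\Sigma_s$, $(\bar d,d)\notin R^J$ whenever $d\notin\mathcal A$. AEL formulas over $\Sigma'$ are built like dAEL formulas but with a single unindexed modal operator $K$; an AEL belief pair is a pair $(P,S)$ of sets of $\Sigma'$-structures, and the three-valued AEL value is defined like the dAEL one except that $(K\varphi)^{(P,S),J,a}$ is $\mathbf t$ if $\varphi$ has value $\mathbf t$ at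 all $J'\in P$, $\mathbf f$ if it has value $\mathbf f$ at some $J'\in S$, and $\mathbf u$ otherwise. For a $\Sigma$-term $t$ and $\Sigma'$-term $s$, $t_s$ is defined by $x_s=x$ for variables, $f(t_1,\dots,t_n)_s=f((t_1)_s,\dots,(t_n)_s,s)$ for $f\in\Sigma_s$, $f(t_1,\dots,t_n)_s=f((t_1)_s,\dots,(t_n)_s)$ for $f\in\Sigma_o$. $\tau_{\mathit{formula}}(s,\cdot)$: $P(t_1,\dots,t_n)\mapsto P((t_1)_s,\dots,(t_n)_s,s)$ if $P\in\Sigma_s$, $P((t_1)_s,\dots,(t_n)_s)$ if $P\in\Sigma_o$ or equality; commutes with $\neg,\wedge,\forall x$; $\tau_{\mathit{formula}}(s,K_t\phi)=\exists x(x=t_s\wedge\mathrm{Apred}(x)\wedge K\,\tau_{\mathit{formula}}(x,\phi))$ for a fresh variable $x$. For a family $(I_A)_{A\in\mathcal A}$ of structures, $\tau_{\mathit{structure}}((I_A)_A)$ is the $\Sigma'$-structure interpreting $\Sigma_o$ as $I_o$, each $f\in\Sigma_s$ by $f(\bar d,d)=f^{I_d}(\bar d)$ if $d\in\mathcal A$ and $\delta$ otherwise, and each relation $R\in\Sigma_s$ by $(\bar d,d)\in R$ iff $d\in\mathcal A$ and $\bar d\in R^{I_d}$. $\tau_{\mathit{pws}}(\mathcal Q)=\{\tau_{\mathit{structure}}((I_A)_A): I_A\in\mathcal Q_A\text{ for all }A\in\mathcal A\}$, and $\tau_{\mathit{beliefpair}}(\mathcal B)=(\tau_{\mathit{pws}}(\mathcal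 B^c),\tau_{\mathit{pws}}(\mathcal B^l))$. For a $\Sigma'$-structure $J$ and a closed $\Sigma'$-term $t$, $J_t$ is the $\Sigma$-structure with domain $D$ that interprets $\Sigma_o$ as $J$ does and each $s\in\Sigma_s$ by $s^{J_t}(d_1,\dots,d_n)=s^J(d_1,\dots,d_n,t^J)$ (for relation symbols: $\bar d\in s^{J_t}$ iff $(\bar d,t^J)\in s^J$). *)

theory Defs
  imports Main
begin

text \<open>Terms over function symbols of type 'f; variables are natural numbers.
  Arities are not tracked: a structure interprets a function symbol on argument lists
  of every length.\<close>

datatype 'f trm = Var nat | Fn 'f "'f trm list"

datatype ('f, 'r) dfm =
    DAtom 'r "'f trm list"
  | DEq "'f trm" "'f trm"
  | DNeg "('f, 'r) dfm"
  | DConj "('f, 'r) dfm" "('f, 'r) dfm"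
  | DAll nat "('f, 'r) dfm"
  | DK "'f trm" "('f, 'r) dfm"

text \<open>AEL formulas over Sigma' (same symbol names; subjective symbols get one more argument).\<close>
datatype ('f, 'r) afm =
    AAtom 'r "'f trm list"
  | AEq "'f trm" "'f trm"
  | ANeg "('f, 'r) afm"
  | AConj "('f, 'r) afm" "('f, 'r) afm"
  | AAll nat "('f, 'r) afm"
  | AK "('f, 'r) afm"

definition AEx :: "nat \<Rightarrow> ('f, 'r) afm \<Rightarrow> ('f, 'r) afm" where
  "AEx x \<phi> = ANeg (AAll x (ANeg \<phi>))"

fun varsT :: "'f trm \<Rightarrow> nat set" where
  "varsT (Var n) = {n}"
| "varsT (Fn f ts) = \<Union> (set (map varsT ts))"

fun maxvarT :: "'f trm \<Rightarrow> nat" where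
  "maxvarT (Var n) = n"
| "maxvarT (Fn f ts) = foldr max (map maxvarT ts) 0"

primrec freeF :: "('f, 'r) dfm \<Rightarrow> nat set" where
  "freeF (DAtom r ts) = \<Union> (set (map varsT ts))"
| "freeF (DEq t1 t2) = varsT t1 \<union> varsT t2"
| "freeF (DNeg \<phi>) = freeF \<phi>"
| "freeF (DConj \<phi> \<psi>) = freeF \<phi> \<union> freeF \<psi>"
| "freeF (DAll x \<phi>) = freeF \<phi> - {x}"
| "freeF (DK t \<phi>) = varsT t \<union> freeF \<phi>"

primrec maxvarF :: "('f, 'r) dfm \<Rightarrow> nat" where
  "maxvarF (DAtom r ts) = foldr max (map maxvarT ts) 0"
| "maxvarF (DEq t1 t2) = max (maxvarT t1) (maxvarT t2)"
| "maxvarF (DNeg \<phi>) = maxvarF \<phi>"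
| "maxvarF (DConj \<phi> \<psi>) = max (maxvarF \<phi>) (maxvarF \<psi>)"
| "maxvarF (DAll x \<phi>) = max x (maxvarF \<phi>)"
| "maxvarF (DK t \<phi>) = max (maxvarT t) (maxvarF \<phi>)"

definition closed_trm :: "'f trm \<Rightarrow> bool" where
  "closed_trm t \<longleftrightarrow> varsT t = {}"

definition sentence :: "('f, 'r) dfm \<Rightarrow> bool" where
  "sentence \<phi> \<longleftrightarrow> freeF \<phi> = {}"

text \<open>A structure with domain the type 'd (the fixed nonempty domain D = UNIV).\<close>
record ('f, 'r, 'd) struc =
  sfn :: "'f \<Rightarrow> 'd list \<Rightarrow> 'd"
  srl :: "'r \<Rightarrow> 'd list \<Rightarrow> bool"

datatype tv = TT | FF | UU

fun tv_neg :: "tv \<Rightarrow> tv" where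
  "tv_neg TT = FF" | "tv_neg FF = TT" | "tv_neg UU = UU"

definition tv_glb :: "tv set \<Rightarrow> tv" where
  "tv_glb V = (if FF \<in> V then FF else if UU \<in> V then UU else TT)"

definition tv_of_bool :: "bool \<Rightarrow> tv" where
  "tv_of_bool b = (if b then TT else FF)"

fun evalT :: "('f, 'r, 'd, 'z) struc_scheme \<Rightarrow> (nat \<Rightarrow> 'd) \<Rightarrow> 'f trm \<Rightarrow> 'd" where
  "evalT I a (Var n) = a n"
| "evalT I a (Fn f ts) = sfn I f (map (evalT I a) ts)"

text \<open>Io: the fixed objective structure; sf, sr: which function/relation symbols are
  subjective; agents: the set of agents; apred: the unary predicate Apred.\<close>
definition dael_setup ::
  "('f, 'r, 'd) struc \<Rightarrow> ('f \<Rightarrow> bool) \<Rightarrow> ('r \<Rightarrow> bool) \<Rightarrow> 'd set \<Rightarrow> 'r \<Rightarrow> bool" where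
  "dael_setup Io sf sr agents apred \<longleftrightarrow>
     (\<forall>A\<in>agents. \<exists>c. \<not> sf c \<and> sfn Io c [] = A) \<and>
     \<not> sr apred \<and> (\<forall>d. srl Io apred [d] \<longleftrightarrow> d \<in> agents)"

definition is_struc ::
  "('f, 'r, 'd) struc \<Rightarrow> ('f \<Rightarrow> bool) \<Rightarrow> ('r \<Rightarrow> bool) \<Rightarrow> ('f, 'r, 'd) struc \<Rightarrow> bool" where
  "is_struc Io sf sr I \<longleftrightarrow>
     (\<forall>f. \<not> sf f \<longrightarrow> sfn I f = sfn Io f) \<and> (\<forall>r. \<not> sr r \<longrightarrow> srl I r = srl Io r)"

definition is_struc' ::
  "('f, 'r, 'd) struc \<Rightarrow> ('f \<Rightarrow> bool) \<Rightarrow> ('r \<Rightarrow> bool) \<Rightarrow> 'd set \<Rightarrow> 'd \<Rightarrow> ('f, 'r, 'd) struc \<Rightarrow> bool" where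
  "is_struc' Io sf sr agents \<delta> J \<longleftrightarrow>
     is_struc Io sf sr J \<and>
     (\<forall>f ds d. sf f \<and> d \<notin> agents \<longrightarrow> sfn J f (ds @ [d]) = \<delta>) \<and>
     (\<forall>r ds d. sr r \<and> d \<notin> agents \<longrightarrow> \<not> srl J r (ds @ [d]))"

text \<open>A DPWS is a family of PWSs indexed by agents (values at non-agents are irrelevant);
  a DBP is a pair (Bc, Bl) of DPWSs.\<close>
type_synonym ('f, 'r, 'd) dpws = "'d \<Rightarrow> ('f, 'r, 'd) struc set"
type_synonym ('f, 'r, 'd) dbp = "('f, 'r, 'd) dpws \<times> ('f, 'r, 'd) dpws"

definition is_dbp ::
  "('f, 'r, 'd) struc \<Rightarrow> ('f \<Rightarrow> bool) \<Rightarrow> ('r \<Rightarrow> bool) \<Rightarrow> 'd set \<Rightarrow> ('f, 'r, 'd) dbp \<Rightarrow> bool" where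
  "is_dbp Io sf sr agents B \<longleftrightarrow>
     (\<forall>A\<in>agents. \<forall>I \<in> fst B A \<union> snd B A. is_struc Io sf sr I)"

definition consistent_dbp :: "'d set \<Rightarrow> ('f, 'r, 'd) dbp \<Rightarrow> bool" where
  "consistent_dbp agents B \<longleftrightarrow> (\<forall>A\<in>agents. snd B A \<subseteq> fst B A)"

definition univ_consistent_dbp :: "'d set \<Rightarrow> ('f, 'r, 'd) dbp \<Rightarrow> bool" where
  "univ_consistent_dbp agents B \<longleftrightarrow> (\<forall>A\<in>agents. snd B A \<noteq> {})"

primrec dval ::
  "'d set \<Rightarrow> ('f, 'r) dfm \<Rightarrow> ('f, 'r, 'd) dbp \<Rightarrow> ('f, 'r, 'd) struc \<Rightarrow> (nat \<Rightarrow> 'd) \<Rightarrow> tv" where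
  "dval agents (DAtom r ts) B I a = tv_of_bool (srl I r (map (evalT I a) ts))"
| "dval agents (DEq t1 t2) B I a = tv_of_bool (evalT I a t1 = evalT I a t2)"
| "dval agents (DNeg \<phi>) B I a = tv_neg (dval agents \<phi> B I a)"
| "dval agents (DConj \<phi> \<psi>) B I a = tv_glb {dval agents \<phi> B I a, dval agents \<psi> B I a}"
| "dval agents (DAll x \<phi>) B I a = tv_glb (range (\<lambda>d. dval agents \<phi> B I (a(x := d))))"
| "dval agents (DK t \<phi>) B I a =
     (let A = evalT I a t in
      if A \<in> agents \<and> (\<forall>J \<in> fst B A. dval agents \<phi> B J a = TT) then TT
      else if A \<notin> agents \<or> (\<exists>J \<in> snd B A. dval agents \<phi> B J a = FF) then FF
      else UU)"

primrec aval ::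
  "('f, 'r) afm \<Rightarrow> ('f, 'r, 'd) struc set \<times> ('f, 'r, 'd) struc set \<Rightarrow> ('f, 'r, 'd) struc \<Rightarrow> (nat \<Rightarrow> 'd) \<Rightarrow> tv" where
  "aval (AAtom r ts) PS J a = tv_of_bool (srl J r (map (evalT J a) ts))"
| "aval (AEq t1 t2) PS J a = tv_of_bool (evalT J a t1 = evalT J a t2)"
| "aval (ANeg \<phi>) PS J a = tv_neg (aval \<phi> PS J a)"
| "aval (AConj \<phi> \<psi>) PS J a = tv_glb {aval \<phi> PS J a, aval \<psi> PS J a}"
| "aval (AAll x \<phi>) PS J a = tv_glb (range (\<lambda>d. aval \<phi> PS J (a(x := d))))"
| "aval (AK \<phi>) PS J a =
     (if \<forall>J' \<in> fst PS. aval \<phi> PS J' a = TT then TT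
      else if \<exists>J' \<in> snd PS. aval \<phi> PS J' a = FF then FF
      else UU)"

fun tr_trm :: "('f \<Rightarrow> bool) \<Rightarrow> 'f trm \<Rightarrow> 'f trm \<Rightarrow> 'f trm" where
  "tr_trm sf s (Var x) = Var x"
| "tr_trm sf s (Fn f ts) =
     (if sf f then Fn f (map (tr_trm sf s) ts @ [s]) else Fn f (map (tr_trm sf s) ts))"

definition fresh_var :: "'f trm \<Rightarrow> 'f trm \<Rightarrow> ('f, 'r) dfm \<Rightarrow> nat" where
  "fresh_var s t \<phi> = Suc (max (maxvarT s) (max (maxvarT t) (maxvarF \<phi>)))"

primrec tr_formula ::
  "('f \<Rightarrow> bool) \<Rightarrow> ('r \<Rightarrow> bool) \<Rightarrow> 'r \<Rightarrow> 'f trm \<Rightarrow> ('f, 'r) dfm \<Rightarrow> ('f, 'r) afm" where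
  "tr_formula sf sr apred s (DAtom r ts) =
     (if sr r then AAtom r (map (tr_trm sf s) ts @ [s]) else AAtom r (map (tr_trm sf s) ts))"
| "tr_formula sf sr apred s (DEq t1 t2) = AEq (tr_trm sf s t1) (tr_trm sf s t2)"
| "tr_formula sf sr apred s (DNeg \<phi>) = ANeg (tr_formula sf sr apred s \<phi>)"
| "tr_formula sf sr apred s (DConj \<phi> \<psi>) =
     AConj (tr_formula sf sr apred s \<phi>) (tr_formula sf sr apred s \<psi>)"
| "tr_formula sf sr apred s (DAll x \<phi>) = AAll x (tr_formula sf sr apred s \<phi>)"
| "tr_formula sf sr apred s (DK t \<phi>) =
     (let x = fresh_var s t \<phi> in
      AEx x (AConj (AEq (Var x) (tr_trm sf s t))
                   (AConj (AAtom apred [Var x]) (AK (tr_formula sf sr apred (Var x) \<phi>)))))"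

definition tr_structure ::
  "('f, 'r, 'd) struc \<Rightarrow> ('f \<Rightarrow> bool) \<Rightarrow> ('r \<Rightarrow> bool) \<Rightarrow> 'd set \<Rightarrow> 'd \<Rightarrow>
   ('d \<Rightarrow> ('f, 'r, 'd) struc) \<Rightarrow> ('f, 'r, 'd) struc" where
  "tr_structure Io sf sr agents \<delta> I =
     \<lparr> sfn = (\<lambda>f ds. if sf f then
                        (if ds \<noteq> [] \<and> last ds \<in> agents then sfn (I (last ds)) f (butlast ds) else \<delta>)
                      else sfn Io f ds),
       srl = (\<lambda>r ds. if sr r then
                        ds \<noteq> [] \<and> last ds \<in> agents \<and> srl (I (last ds)) r (butlast ds)
                      else srl Io r ds) \<rparr>"

definition tr_pws ::
  "('f, 'r, 'd) struc \<Rightarrow> ('f \<Rightarrow> bool) \<Rightarrow> ('r \<Rightarrow> bool) \<Rightarrow> 'd set \<Rightarrow> 'd \<Rightarrow>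
   ('f, 'r, 'd) dpws \<Rightarrow> ('f, 'r, 'd) struc set" where
  "tr_pws Io sf sr agents \<delta> Q =
     {tr_structure Io sf sr agents \<delta> I | I. \<forall>A\<in>agents. I A \<in> Q A}"

definition tr_beliefpair ::
  "('f, 'r, 'd) struc \<Rightarrow> ('f \<Rightarrow> bool) \<Rightarrow> ('r \<Rightarrow> bool) \<Rightarrow> 'd set \<Rightarrow> 'd \<Rightarrow>
   ('f, 'r, 'd) dbp \<Rightarrow> ('f, 'r, 'd) struc set \<times> ('f, 'r, 'd) struc set" where
  "tr_beliefpair Io sf sr agents \<delta> B =
     (tr_pws Io sf sr agents \<delta> (fst B), tr_pws Io sf sr agents \<delta> (snd B))"

text \<open>J_t for a Sigma'-structure J and a closed Sigma'-term t (the assignment used to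
  evaluate t is irrelevant since t is closed; we use the constant assignment delta).\<close>
definition restrict_struc ::
  "('f \<Rightarrow> bool) \<Rightarrow> ('r \<Rightarrow> bool) \<Rightarrow> 'd \<Rightarrow> ('f, 'r, 'd) struc \<Rightarrow> 'f trm \<Rightarrow> ('f, 'r, 'd) struc" where
  "restrict_struc sf sr \<delta> J t =
     (let d = evalT J (\<lambda>_. \<delta>) t in
      \<lparr> sfn = (\<lambda>f ds. if sf f then sfn J f (ds @ [d]) else sfn J f ds),
        srl = (\<lambda>r ds. if sr r then srl J r (ds @ [d]) else srl J r ds) \<rparr>)"

end

theory Submission
  imports Defs
begin

text \<open>The translation is compositional: reading a \<open>\<Sigma>'\<close>-structure \<open>J\<close> through the extra argument
  \<open>e\<close> gives a \<open>\<Sigma>\<close>-structure \<open>J\<^sub>e\<close>, and \<open>\<tau>(s, \<phi>)\<close> evaluated in \<open>J\<close> is \<open>\<phi>\<close> evaluated in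
  \<open>J\<^sub>e\<close> with \<open>e\<close> the value of \<open>s\<close>. For \<open>K\<^sub>t \<psi>\<close>, the existential pins the fresh variable to the agent \<open>A\<close> denoted by
  \<open>t\<close>; slicing the translated possible world structures at \<open>A\<close> recovers exactly the worlds
  \<open>\<B>\<^sup>c\<^sub>A\<close> and \<open>\<B>\<^sup>l\<^sub>A\<close>, because every other agent's component can be filled by some world,
  which is where universal consistency is needed.\<close>

definition struc_slice ::
  "('f \<Rightarrow> bool) \<Rightarrow> ('r \<Rightarrow> bool) \<Rightarrow> ('f, 'r, 'd) struc \<Rightarrow> 'd \<Rightarrow> ('f, 'r, 'd) struc" where
  "struc_slice sf sr J e =
     \<lparr> sfn = (\<lambda>f ds. if sf f then sfn J f (ds @ [e]) else sfn J f ds),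
       srl = (\<lambda>r ds. if sr r then srl J r (ds @ [e]) else srl J r ds) \<rparr>"

lemma sfn_struc_slice [simp]:
  "sfn (struc_slice sf sr J e) f ds = (if sf f then sfn J f (ds @ [e]) else sfn J f ds)"
  by (simp add: struc_slice_def)

lemma srl_struc_slice [simp]:
  "srl (struc_slice sf sr J e) r ds = (if sr r then srl J r (ds @ [e]) else srl J r ds)"
  by (simp add: struc_slice_def)

lemma restrict_struc_eq_struc_slice:
  "restrict_struc sf sr \<delta> J t = struc_slice sf sr J (evalT J (\<lambda>_. \<delta>) t)"
  by (simp add: restrict_struc_def struc_slice_def Let_def)

lemma evalT_tr_trm:
  "evalT J a (tr_trm sf s u) = evalT (struc_slice sf sr J (evalT J a s)) a u"
proof (induction u)
  case (Fn f ts)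
  then have "map (\<lambda>u. evalT J a (tr_trm sf s u)) ts
           = map (evalT (struc_slice sf sr J (evalT J a s)) a) ts"
    by auto
  then show ?case by (simp add: comp_def del: map_eq_conv)
qed simp

lemma evalT_cong: "(\<And>v. v \<in> varsT u \<Longrightarrow> a v = b v) \<Longrightarrow> evalT I a u = evalT I b u"
proof (induction u)
  case (Fn f ts)
  then have "map (evalT I a) ts = map (evalT I b) ts" by auto
  then show ?case by (simp del: map_eq_conv)
qed simp

lemma foldr_max_ge: "x \<in> set xs \<Longrightarrow> (x::nat) \<le> foldr max xs 0"
  by (induction xs) auto

lemma maxvarT_ge: "v \<in> varsT u \<Longrightarrow> v \<le> maxvarT u"
proof (induction u)
  case (Fn f ts)
  then obtain u where u: "u \<in> set ts" "v \<in> varsT u" by auto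
  then have "v \<le> maxvarT u" using Fn by auto
  also have "\<dots> \<le> foldr max (map maxvarT ts) 0" using u by (intro foldr_max_ge) auto
  finally show ?case by simp
qed simp

lemma varsT_tr_trm_subset: "varsT (tr_trm sf s u) \<subseteq> varsT s \<union> varsT u"
  by (induction u) auto

lemma maxvarF_ge_freeF: "v \<in> freeF \<phi> \<Longrightarrow> v \<le> maxvarF \<phi>"
proof (induction \<phi>)
  case (DAtom r ts)
  then obtain u where u: "u \<in> set ts" "v \<in> varsT u" by auto
  then have "v \<le> maxvarT u" by (simp add: maxvarT_ge)
  also have "\<dots> \<le> foldr max (map maxvarT ts) 0" using u by (intro foldr_max_ge) auto
  finally show ?case by simp
qed (auto dest: maxvarT_ge)

lemma dval_cong:
  "(\<And>v. v \<in> freeF \<phi> \<Longrightarrow> a v = b v) \<Longrightarrow> dval agents \<phi> B I a = dval agents \<phi> B I b"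
proof (induction \<phi> arbitrary: I a b)
  case (DAtom r ts)
  then have "map (evalT I a) ts = map (evalT I b) ts" by (auto intro!: evalT_cong)
  then show ?case by (simp del: map_eq_conv)
next
  case (DEq t1 t2)
  then show ?case using evalT_cong[of t1 a b I] evalT_cong[of t2 a b I] by simp
next
  case (DNeg \<phi>)
  have "dval agents \<phi> B I a = dval agents \<phi> B I b"
    by (rule DNeg.IH) (use DNeg.prems in simp)
  then show ?case by simp
next
  case (DConj \<phi>1 \<phi>2)
  have "dval agents \<phi>1 B I a = dval agents \<phi>1 B I b" "dval agents \<phi>2 B I a = dval agents \<phi>2 B I b"
    by (rule DConj.IH; use DConj.prems in simp)+
  then show ?case by simp
next
  case (DAll x \<phi>)
  have "dval agents \<phi> B I (a(x := d)) = dval agents \<phi> B I (b(x := d))" for d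
    by (rule DAll.IH) (use DAll.prems in auto)
  then show ?case by simp
next
  case (DK t \<phi>)
  have "evalT I a t = evalT I b t" by (rule evalT_cong) (use DK.prems in auto)
  moreover have "dval agents \<phi> B J a = dval agents \<phi> B J b" for J
    by (rule DK.IH) (use DK.prems in auto)
  ultimately show ?case by (simp add: Let_def)
qed

lemma tv_glb_range_eq:
  assumes "\<And>d. d \<noteq> e \<Longrightarrow> f d = TT"
  shows "tv_glb (range f) = f e"
proof -
  have "v \<in> range f \<longleftrightarrow> v = f e" if "v \<noteq> TT" for v
    using assms that by (metis rangeE rangeI)
  then show ?thesis
    unfolding tv_glb_def by (cases "f e") auto
qed

lemma aval_AEx_unique:
  assumes "\<And>d. d \<noteq> e \<Longrightarrow> aval \<psi> PS J (a(x := d)) = FF"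
  shows "aval (AEx x \<psi>) PS J a = aval \<psi> PS J (a(x := e))"
proof -
  have "tv_glb (range (\<lambda>d. tv_neg (aval \<psi> PS J (a(x := d)))))
      = tv_neg (aval \<psi> PS J (a(x := e)))"
    using assms by (intro tv_glb_range_eq) auto
  then show ?thesis unfolding AEx_def by (cases "aval \<psi> PS J (a(x := e))") auto
qed

lemma aval_AEx_agent_clause:
  assumes apred: "\<And>d. srl J apred [d] \<longleftrightarrow> d \<in> agents"
    and fresh: "x \<notin> varsT u"
  shows "aval (AEx x (AConj (AEq (Var x) u) (AConj (AAtom apred [Var x]) (AK \<psi>)))) PS J a
       = (let A = evalT J a u in if A \<in> agents then aval (AK \<psi>) PS J (a(x := A)) else FF)"
proof -
  define A where "A = evalT J a u"
  define k where "k d = aval (AK \<psi>) PS J (a(x := d))" for d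
  have "evalT J (a(x := d)) u = A" for d
    unfolding A_def using fresh by (intro evalT_cong) auto
  then have clause: "aval (AConj (AEq (Var x) u) (AConj (AAtom apred [Var x]) (AK \<psi>))) PS J (a(x := d))
      = tv_glb {tv_of_bool (d = A), tv_glb {tv_of_bool (d \<in> agents), k d}}" for d
    unfolding k_def using apred by (simp del: aval.simps(6))
  have "aval (AEx x (AConj (AEq (Var x) u) (AConj (AAtom apred [Var x]) (AK \<psi>)))) PS J a
      = aval (AConj (AEq (Var x) u) (AConj (AAtom apred [Var x]) (AK \<psi>))) PS J (a(x := A))"
    by (rule aval_AEx_unique) (simp only: clause, simp add: tv_of_bool_def tv_glb_def)
  also have "\<dots> = tv_glb {TT, tv_glb {tv_of_bool (A \<in> agents), k A}}"
    by (simp only: clause, simp add: tv_of_bool_def)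
  also have "\<dots> = (if A \<in> agents then k A else FF)"
    by (cases "k A") (auto simp: tv_of_bool_def tv_glb_def)
  finally show ?thesis by (simp add: A_def k_def Let_def)
qed

lemma struc_slice_tr_structure:
  assumes "A \<in> agents" "is_struc Io sf sr (I A)"
  shows "struc_slice sf sr (tr_structure Io sf sr agents \<delta> I) A = I A"
  using assms by (auto simp: struc_slice_def tr_structure_def is_struc_def fun_eq_iff)

lemma struc_slice_image_tr_pws:
  assumes nonempty: "\<forall>A\<in>agents. Q A \<noteq> {}"
    and strucs: "\<forall>A\<in>agents. \<forall>I\<in>Q A. is_struc Io sf sr I"
    and A: "A \<in> agents"
  shows "(\<lambda>J. struc_slice sf sr J A) ` tr_pws Io sf sr agents \<delta> Q = Q A"
proof
  show "(\<lambda>J. struc_slice sf sr J A) ` tr_pws Io sf sr agents \<delta> Q \<subseteq> Q A"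
    using strucs A by (auto simp: tr_pws_def struc_slice_tr_structure)
next
  show "Q A \<subseteq> (\<lambda>J. struc_slice sf sr J A) ` tr_pws Io sf sr agents \<delta> Q"
  proof
    fix K assume K: "K \<in> Q A"
    define I where "I = (\<lambda>A'. if A' = A then K else SOME K'. K' \<in> Q A')"
    have "\<forall>A'\<in>agents. I A' \<in> Q A'"
      using nonempty K unfolding I_def by (auto intro: some_in_eq[THEN iffD2])
    then have "tr_structure Io sf sr agents \<delta> I \<in> tr_pws Io sf sr agents \<delta> Q"
      unfolding tr_pws_def by auto
    moreover have "struc_slice sf sr (tr_structure Io sf sr agents \<delta> I) A = K"
      using struc_slice_tr_structure[of A agents Io sf sr I] strucs A K by (simp add: I_def)
    ultimately show "K \<in> (\<lambda>J. struc_slice sf sr J A) ` tr_pws Io sf sr agents \<delta> Q"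
      by force
  qed
qed

lemma aval_AK_tr_beliefpair:
  fixes Io :: "('f, 'r, 'd) struc" and sf :: "'f \<Rightarrow> bool" and sr :: "'r \<Rightarrow> bool"
    and agents :: "'d set" and \<delta> :: 'd and B :: "('f, 'r, 'd) dbp"
  defines "TB \<equiv> tr_beliefpair Io sf sr agents \<delta> B"
  assumes dbp: "is_dbp Io sf sr agents B"
    and cons: "consistent_dbp agents B"
    and univ: "univ_consistent_dbp agents B"
    and A: "A \<in> agents"
    and transfer: "\<And>J'. J' \<in> fst TB \<union> snd TB \<Longrightarrow> aval \<psi> TB J' b = g (struc_slice sf sr J' A)"
  shows "aval (AK \<psi>) TB J b
       = (if \<forall>K\<in>fst B A. g K = TT then TT else if \<exists>K\<in>snd B A. g K = FF then FF else UU)"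
proof -
  have "\<forall>A\<in>agents. snd B A \<noteq> {}" "\<forall>A\<in>agents. fst B A \<noteq> {}"
    using univ cons by (auto simp: univ_consistent_dbp_def consistent_dbp_def)
  moreover have "\<forall>A\<in>agents. \<forall>I\<in>fst B A. is_struc Io sf sr I"
    "\<forall>A\<in>agents. \<forall>I\<in>snd B A. is_struc Io sf sr I"
    using dbp by (auto simp: is_dbp_def)
  ultimately have slices: "(\<lambda>J'. struc_slice sf sr J' A) ` fst TB = fst B A"
    "(\<lambda>J'. struc_slice sf sr J' A) ` snd TB = snd B A"
    unfolding TB_def tr_beliefpair_def using struc_slice_image_tr_pws[OF _ _ A] by simp_all
  have "(\<forall>J'\<in>fst TB. aval \<psi> TB J' b = TT) \<longleftrightarrow> (\<forall>J'\<in>fst TB. g (struc_slice sf sr J' A) = TT)"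
    "(\<exists>J'\<in>snd TB. aval \<psi> TB J' b = FF) \<longleftrightarrow> (\<exists>J'\<in>snd TB. g (struc_slice sf sr J' A) = FF)"
    using transfer by auto
  moreover have "(\<forall>J'\<in>fst TB. g (struc_slice sf sr J' A) = TT) \<longleftrightarrow> (\<forall>K\<in>fst B A. g K = TT)"
    "(\<exists>J'\<in>snd TB. g (struc_slice sf sr J' A) = FF) \<longleftrightarrow> (\<exists>K\<in>snd B A. g K = FF)"
    unfolding slices[symmetric] by simp_all
  ultimately show ?thesis by (simp only: aval.simps(6))
qed

lemma tr_structure_apred:
  "dael_setup Io sf sr agents apred \<Longrightarrow>
    srl (tr_structure Io sf sr agents \<delta> I) apred [d] \<longleftrightarrow> d \<in> agents"
  by (auto simp: dael_setup_def tr_structure_def)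

lemma aval_tr_formula_DK:
  assumes dael: "dael_setup Io sf sr agents apred"
    and dbp: "is_dbp Io sf sr agents B"
    and cons: "consistent_dbp agents B"
    and univ: "univ_consistent_dbp agents B"
    and IH: "\<And>s J a. (\<And>v. v \<in> varsT s \<Longrightarrow> maxvarF \<phi> < v) \<Longrightarrow>
      (\<And>d. srl J apred [d] \<longleftrightarrow> d \<in> agents) \<Longrightarrow>
      aval (tr_formula sf sr apred s \<phi>) (tr_beliefpair Io sf sr agents \<delta> B) J a
        = dval agents \<phi> B (struc_slice sf sr J (evalT J a s)) a"
    and apred: "\<And>d. srl J apred [d] \<longleftrightarrow> d \<in> agents"
  shows "aval (tr_formula sf sr apred s (DK t \<phi>)) (tr_beliefpair Io sf sr agents \<delta> B) J a
       = dval agents (DK t \<phi>) B (struc_slice sf sr J (evalT J a s)) a"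
proof -
  define TB where "TB = tr_beliefpair Io sf sr agents \<delta> B"
  define x where "x = fresh_var s t \<phi>"
  define A where "A = evalT J a (tr_trm sf s t)"
  have x_fresh: "x \<notin> varsT (tr_trm sf s t)" "maxvarF \<phi> < x"
    using varsT_tr_trm_subset[of sf s t] maxvarT_ge[of x s] maxvarT_ge[of x t]
    unfolding x_def fresh_var_def by auto
  have A_eq: "A = evalT (struc_slice sf sr J (evalT J a s)) a t"
    unfolding A_def by (rule evalT_tr_trm)
  have lhs: "aval (tr_formula sf sr apred s (DK t \<phi>)) TB J a
      = (if A \<in> agents then aval (AK (tr_formula sf sr apred (Var x) \<phi>)) TB J (a(x := A)) else FF)"
    using aval_AEx_agent_clause[OF apred x_fresh(1),
        of "tr_formula sf sr apred (Var x) \<phi>" TB a]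
    unfolding tr_formula.simps Let_def x_def[symmetric] A_def[symmetric] .
  have inner: "aval (tr_formula sf sr apred (Var x) \<phi>) TB J' (a(x := A))
      = dval agents \<phi> B (struc_slice sf sr J' A) a"
    if "J' \<in> fst TB \<union> snd TB" for J'
  proof -
    have "\<exists>I. J' = tr_structure Io sf sr agents \<delta> I"
      using that unfolding TB_def tr_beliefpair_def tr_pws_def by auto
    then obtain I where "J' = tr_structure Io sf sr agents \<delta> I" ..
    then have "aval (tr_formula sf sr apred (Var x) \<phi>) TB J' (a(x := A))
        = dval agents \<phi> B (struc_slice sf sr J' A) (a(x := A))"
      unfolding TB_def using x_fresh(2) tr_structure_apred[OF dael] by (subst IH) auto
    also have "\<dots> = dval agents \<phi> B (struc_slice sf sr J' A) a"
      using maxvarF_ge_freeF[of _ \<phi>] x_fresh(2) by (intro dval_cong) (auto dest: leD)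
    finally show ?thesis .
  qed
  have "(if A \<in> agents then aval (AK (tr_formula sf sr apred (Var x) \<phi>)) TB J (a(x := A)) else FF)
      = dval agents (DK t \<phi>) B (struc_slice sf sr J (evalT J a s)) a"
  proof (cases "A \<in> agents")
    case True
    have "dval agents (DK t \<phi>) B (struc_slice sf sr J (evalT J a s)) a
        = (if \<forall>K\<in>fst B A. dval agents \<phi> B K a = TT then TT
           else if \<exists>K\<in>snd B A. dval agents \<phi> B K a = FF then FF else UU)"
      using True by (simp add: A_eq[symmetric] Let_def)
    then show ?thesis
      using aval_AK_tr_beliefpair[OF dbp cons univ True inner[unfolded TB_def], folded TB_def] True
      by (simp only: if_True)
  qed (simp add: A_eq[symmetric] Let_def)
  then show ?thesis
    using lhs by (simp only: TB_def)
qed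

text \<open>The freshness hypothesis on \<open>s\<close> keeps the variables of \<open>s\<close> out of reach of the
  quantifiers of \<open>\<phi>\<close>; it holds for the fresh variable introduced by each K-clause.\<close>

lemma aval_tr_formula:
  assumes dael: "dael_setup Io sf sr agents apred"
    and dbp: "is_dbp Io sf sr agents B"
    and cons: "consistent_dbp agents B"
    and univ: "univ_consistent_dbp agents B"
    and fresh: "\<And>v. v \<in> varsT s \<Longrightarrow> maxvarF \<phi> < v"
    and apred: "\<And>d. srl J apred [d] \<longleftrightarrow> d \<in> agents"
  shows "aval (tr_formula sf sr apred s \<phi>) (tr_beliefpair Io sf sr agents \<delta> B) J a
       = dval agents \<phi> B (struc_slice sf sr J (evalT J a s)) a"
  using fresh apred
proof (induction \<phi> arbitrary: s J a)
  case (DAtom r ts)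
  have "map (\<lambda>u. evalT J a (tr_trm sf s u)) ts
      = map (evalT (struc_slice sf sr J (evalT J a s)) a) ts"
    by (simp add: evalT_tr_trm[where sr = sr])
  then show ?case by (simp add: comp_def del: map_eq_conv)
next
  case (DEq t1 t2)
  then show ?case by (simp add: evalT_tr_trm[where sr = sr])
next
  case (DNeg \<phi>)
  then show ?case by simp
next
  case (DConj \<phi>1 \<phi>2)
  then show ?case by (simp add: DConj.IH)
next
  case (DAll x \<phi>)
  then have "x \<notin> varsT s" by force
  then have "evalT J (a(x := d)) s = evalT J a s" for d by (intro evalT_cong) auto
  then have "aval (tr_formula sf sr apred s \<phi>) (tr_beliefpair Io sf sr agents \<delta> B) J (a(x := d))
      = dval agents \<phi> B (struc_slice sf sr J (evalT J a s)) (a(x := d))" for d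
    using DAll by (metis max.strict_boundedE maxvarF.simps(5))
  then show ?case by simp
next
  case (DK t \<phi>)
  show ?case by (rule aval_tr_formula_DK[OF dael dbp cons univ DK.IH DK.prems(2)])
qed

theorem mainTheorem10:
  fixes Io :: "('f, 'r, 'd) struc"
    and sf :: "'f \<Rightarrow> bool" and sr :: "'r \<Rightarrow> bool"
    and agents :: "'d set" and apred :: 'r and \<delta> :: 'd
    and t :: "'f trm" and \<phi> :: "('f, 'r) dfm"
    and B :: "('f, 'r, 'd) dbp" and J :: "('f, 'r, 'd) struc"
    and a :: "nat \<Rightarrow> 'd"
  assumes "dael_setup Io sf sr agents apred"
    and "closed_trm t"
    and "sentence \<phi>"
    and "is_dbp Io sf sr agents B"
    and "consistent_dbp agents B"
    and "univ_consistent_dbp agents B"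
    and "is_struc' Io sf sr agents \<delta> J"
  shows "aval (tr_formula sf sr apred t \<phi>) (tr_beliefpair Io sf sr agents \<delta> B) J a
         = dval agents \<phi> B (restrict_struc sf sr \<delta> J t) a"
proof -
  have closed: "varsT t = {}" using assms(2) by (simp add: closed_trm_def)
  then have "evalT J (\<lambda>_. \<delta>) t = evalT J a t" by (intro evalT_cong) auto
  then have slice: "restrict_struc sf sr \<delta> J t = struc_slice sf sr J (evalT J a t)"
    by (simp add: restrict_struc_eq_struc_slice)
  have "srl J apred [d] \<longleftrightarrow> d \<in> agents" for d
    using assms(1,7) by (auto simp: dael_setup_def is_struc'_def is_struc_def)
  then show ?thesis
    unfolding slice by (intro aval_tr_formula[OF assms(1,4,5,6)]) (simp_all add: closed)
qed

end
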